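(* Let $\mathcal{M}$ be a smooth manifold with a global frame $E_1,\dots,E_n$ and let $\rhd$ be the Weitzenböck connection $Y\rhd X=Y[x^i]E_i$ for $X=x^iE_i$. Assume that $\rhd$ has constant (parallel) torsion. Then $(\mathcal{C}^\infty(\mathcal{M}),\mathfrak{X}(\mathcal{M}),[-,-],\rho,\rhd,\tau)$ is an $\mathbb{R}$-tracial post-Lie-Rinehart algebra, where $[X,Y]=x^iy^j\llbracket E_i,E_j\rrbracket_J$, $\rho(X)(\phi)=X[\phi]$, and $\tau(u)=u^i_i$ for $u\in\mathrm{End}_{\mathcal{C}^\infty(\mathcal{M})}(\mathfrak{X}(\mathcal{M}))$ with $u(E_j)=u^i_jE_i$ (restricted to elementary endomorphisms).
   Context: Einstein summation is used. $\llbracket-,-\rrbracket_J$ is the Jacobi bracket of vector fields; $\llbracket X,Y\rrbracket_J=[X,Y]+X\rhd Y-Y\rhd X$, and $[X,Y]=-T(X,Y)$ where $T(X,Y)=X\rhd Y-Y\rhd X-\llbracket X,Y\rrbracket_J$. Convention for the tuple $(R,L,[-,-],\rho,\rhd,\tau)$: $R$ is a commutative algebra, $L$ an $R$-module, $[-,-]$ an $R$-bilinear Lie bracket, $\rho\colon L\to\mathrm{Der}(R)$ $R$-linear, $\rhd$ a connection ($\mathbb{R}$-bilinear, $R$-linear in the first argument, $X\rhd(fY)=\rho(X)(f)Y+fX\rhd Y$). It is a post-Lie-Rinehart algebra if $(R,L,\llbracket-,-\rrbracket,\rho)$ with $\llbracket X,Y\rrbracket=[X,Y]+X\rhd Y-Y\rhd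 X$ is a Lie-Rinehart algebra ($\rho$ a Lie morphism, $\llbracket X,fY\rrbracket=\rho(X)(f)Y+f\llbracket X,Y\rrbracket$) and $\rhd$ is flat ($\llbracket X,Y\rrbracket\rhd Z=X\rhd(Y\rhd Z)-Y\rhd(X\rhd Z)$) with parallel torsion ($X\rhd[Y,Z]=[X\rhd Y,Z]+[Y,X\rhd Z]$). For $X\in L$, $dX(Z)=Z\rhd X$, $\delta X(Z)=-[Z,X]$, $(\hat\nabla_X\nu)(Y)=X\rhd\nu(Y)-\nu(X\rhd Y)$; $\mathrm{El}_R(L)$ is the $R$-subalgebra of $\mathrm{End}_R(L)$ generated by all $\hat\nabla_{X_1}\cdots\hat\nabla_{X_m}dY$, $\hat\nabla_{X_1}\cdots\hat\nabla_{X_m}\delta Y$ ($m\ge0$). Tracial means there is an $R$-linear $\tau\colon\mathrm{El}_R(L)\to R$ with $\tau(\hat\nabla_X\nu)=\rho(X)(\tau(\nu))$ and $\tau(\nu\circ\mu)=\tau(\mu\circ\nu)$. *)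

theory Defs
  imports "HOL-Analysis.Analysis"
begin

text \<open>C^k on an open set, via iterated directional derivatives (the type stays fixed).\<close>
fun Ck_on :: "nat \<Rightarrow> 'a::euclidean_space set \<Rightarrow> ('a \<Rightarrow> 'b::real_normed_vector) \<Rightarrow> bool" where
  "Ck_on 0 U f = continuous_on U f"
| "Ck_on (Suc k) U f =
     (\<exists>D. (\<forall>x\<in>U. (f has_derivative D x) (at x)) \<and> (\<forall>v. Ck_on k U (\<lambda>x. D x v)))"

definition smooth_on :: "'a::euclidean_space set \<Rightarrow> ('a \<Rightarrow> 'b::real_normed_vector) \<Rightarrow> bool" where
  "smooth_on U f \<longleftrightarrow> open U \<and> (\<forall>k. Ck_on k U f)"

definition smooth_atlas :: "('m::topological_space set \<times> ('m \<Rightarrow> 'e::euclidean_space)) set \<Rightarrow> bool" where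
  "smooth_atlas A \<longleftrightarrow>
     (\<forall>(U,\<phi>)\<in>A. open U \<and> open (\<phi> ` U) \<and> homeomorphism U (\<phi> ` U) \<phi> (inv_into U \<phi>)) \<and>
     (\<Union>(fst ` A) = UNIV) \<and>
     (\<forall>(U,\<phi>)\<in>A. \<forall>(V,\<psi>)\<in>A. smooth_on (\<phi> ` (U \<inter> V)) (\<psi> \<circ> inv_into U \<phi>))"

definition smooth_funs :: "('m::topological_space set \<times> ('m \<Rightarrow> 'e::euclidean_space)) set \<Rightarrow> ('m \<Rightarrow> real) set" where
  "smooth_funs A = {f. \<forall>(U,\<phi>)\<in>A. smooth_on (\<phi> ` U) (f \<circ> inv_into U \<phi>)}"

type_synonym 'm vf = "('m \<Rightarrow> real) \<Rightarrow> ('m \<Rightarrow> real)"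

text \<open>Vector fields X(M) = derivations of C^\<infinity>(M) (extended by 0 outside C^\<infinity>(M)).\<close>
definition vector_fields :: "('m::topological_space set \<times> ('m \<Rightarrow> 'e::euclidean_space)) set \<Rightarrow> 'm vf set" where
  "vector_fields A = {X.
     (\<forall>f\<in>smooth_funs A. X f \<in> smooth_funs A) \<and>
     (\<forall>f\<in>smooth_funs A. \<forall>g\<in>smooth_funs A. X (\<lambda>x. f x + g x) = (\<lambda>x. X f x + X g x)) \<and>
     (\<forall>c. \<forall>f\<in>smooth_funs A. X (\<lambda>x. c * f x) = (\<lambda>x. c * X f x)) \<and>
     (\<forall>f\<in>smooth_funs A. \<forall>g\<in>smooth_funs A. X (\<lambda>x. f x * g x) = (\<lambda>x. f x * X g x + g x * X f x)) \<and>
     (\<forall>f. f \<notin> smooth_funs A \<longrightarrow> X f = (\<lambda>x. 0))}"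

definition vadd :: "'m vf \<Rightarrow> 'm vf \<Rightarrow> 'm vf" where
  "vadd X Y = (\<lambda>f x. X f x + Y f x)"
definition vzero :: "'m vf" where
  "vzero = (\<lambda>f x. 0)"
definition vsmul :: "('m \<Rightarrow> real) \<Rightarrow> 'm vf \<Rightarrow> 'm vf" where
  "vsmul g X = (\<lambda>f x. g x * X f x)"

definition jacobi_br :: "'m vf \<Rightarrow> 'm vf \<Rightarrow> 'm vf" where
  "jacobi_br X Y = (\<lambda>f x. X (Y f) x - Y (X f) x)"

definition frame_comb :: "(nat \<Rightarrow> 'm vf) \<Rightarrow> nat \<Rightarrow> (nat \<Rightarrow> 'm \<Rightarrow> real) \<Rightarrow> 'm vf" where
  "frame_comb E n x = (\<lambda>f p. \<Sum>i<n. x i p * E i f p)"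

text \<open>Global frame E_0,...,E_(n-1): a basis of X(M) as a C^\<infinity>(M)-module.\<close>
definition global_frame :: "('m::topological_space set \<times> ('m \<Rightarrow> 'e::euclidean_space)) set \<Rightarrow> (nat \<Rightarrow> 'm vf) \<Rightarrow> nat \<Rightarrow> bool" where
  "global_frame A E n \<longleftrightarrow>
     (\<forall>i<n. E i \<in> vector_fields A) \<and>
     (\<forall>X\<in>vector_fields A. \<exists>x. (\<forall>i<n. x i \<in> smooth_funs A) \<and> X = frame_comb E n x) \<and>
     (\<forall>x. (\<forall>i<n. x i \<in> smooth_funs A) \<and> frame_comb E n x = vzero \<longrightarrow> (\<forall>i<n. x i = (\<lambda>p. 0)))"

definition frame_coef :: "('m::topological_space set \<times> ('m \<Rightarrow> 'e::euclidean_space)) set \<Rightarrow> (nat \<Rightarrow> 'm vf) \<Rightarrow> nat \<Rightarrow> 'm vf \<Rightarrow> nat \<Rightarrow> 'm \<Rightarrow> real" where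
  "frame_coef A E n X = (SOME x. (\<forall>i<n. x i \<in> smooth_funs A) \<and> X = frame_comb E n x)"

definition weitz :: "('m::topological_space set \<times> ('m \<Rightarrow> 'e::euclidean_space)) set \<Rightarrow> (nat \<Rightarrow> 'm vf) \<Rightarrow> nat \<Rightarrow> 'm vf \<Rightarrow> 'm vf \<Rightarrow> 'm vf" where
  "weitz A E n Y X = frame_comb E n (\<lambda>i. Y (frame_coef A E n X i))"

definition torsion :: "('m vf \<Rightarrow> 'm vf \<Rightarrow> 'm vf) \<Rightarrow> 'm vf \<Rightarrow> 'm vf \<Rightarrow> 'm vf" where
  "torsion tri X Y = (\<lambda>f x. tri X Y f x - tri Y X f x - jacobi_br X Y f x)"

definition frame_bracket :: "('m::topological_space set \<times> ('m \<Rightarrow> 'e::euclidean_space)) set \<Rightarrow> (nat \<Rightarrow> 'm vf) \<Rightarrow> nat \<Rightarrow> 'm vf \<Rightarrow> 'm vf \<Rightarrow> 'm vf" where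
  "frame_bracket A E n X Y =
     (\<lambda>f p. \<Sum>i<n. \<Sum>j<n. frame_coef A E n X i p * frame_coef A E n Y j p * jacobi_br (E i) (E j) f p)"

definition frame_trace :: "('m::topological_space set \<times> ('m \<Rightarrow> 'e::euclidean_space)) set \<Rightarrow> (nat \<Rightarrow> 'm vf) \<Rightarrow> nat \<Rightarrow> ('m vf \<Rightarrow> 'm vf) \<Rightarrow> 'm \<Rightarrow> real" where
  "frame_trace A E n u = (\<lambda>p. \<Sum>i<n. frame_coef A E n (u (E i)) i p)"

section \<open>Post-Lie-Rinehart algebras (R a subalgebra of real-valued functions, pointwise ops)\<close>

definition comm_R_algebra :: "('m \<Rightarrow> real) set \<Rightarrow> bool" where
  "comm_R_algebra Rs \<longleftrightarrow> (\<forall>c. (\<lambda>x. c) \<in> Rs) \<and>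
     (\<forall>f\<in>Rs. \<forall>g\<in>Rs. (\<lambda>x. f x + g x) \<in> Rs \<and> (\<lambda>x. f x * g x) \<in> Rs)"

definition R_module :: "('m \<Rightarrow> real) set \<Rightarrow> 'v set \<Rightarrow> ('v \<Rightarrow> 'v \<Rightarrow> 'v) \<Rightarrow> 'v \<Rightarrow> (('m \<Rightarrow> real) \<Rightarrow> 'v \<Rightarrow> 'v) \<Rightarrow> bool" where
  "R_module Rs Ls add zero smul \<longleftrightarrow>
     zero \<in> Ls \<and>
     (\<forall>X\<in>Ls. \<forall>Y\<in>Ls. add X Y \<in> Ls) \<and> (\<forall>f\<in>Rs. \<forall>X\<in>Ls. smul f X \<in> Ls) \<and>
     (\<forall>X\<in>Ls. \<forall>Y\<in>Ls. \<forall>Z\<in>Ls. add (add X Y) Z = add X (add Y Z)) \<and>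
     (\<forall>X\<in>Ls. \<forall>Y\<in>Ls. add X Y = add Y X) \<and>
     (\<forall>X\<in>Ls. add X zero = X) \<and>
     (\<forall>X\<in>Ls. add X (smul (\<lambda>x. -1) X) = zero) \<and>
     (\<forall>f\<in>Rs. \<forall>g\<in>Rs. \<forall>X\<in>Ls. smul (\<lambda>x. f x + g x) X = add (smul f X) (smul g X)) \<and>
     (\<forall>f\<in>Rs. \<forall>X\<in>Ls. \<forall>Y\<in>Ls. smul f (add X Y) = add (smul f X) (smul f Y)) \<and>
     (\<forall>f\<in>Rs. \<forall>g\<in>Rs. \<forall>X\<in>Ls. smul (\<lambda>x. f x * g x) X = smul f (smul g X)) \<and>
     (\<forall>X\<in>Ls. smul (\<lambda>x. 1) X = X)"

text \<open>Lie bracket on Ls which is bilinear over the scalars S (S = R or S = constants)\<close>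
definition lie_bracket_over :: "('m \<Rightarrow> real) set \<Rightarrow> 'v set \<Rightarrow> ('v \<Rightarrow> 'v \<Rightarrow> 'v) \<Rightarrow> 'v \<Rightarrow> (('m \<Rightarrow> real) \<Rightarrow> 'v \<Rightarrow> 'v) \<Rightarrow> ('v \<Rightarrow> 'v \<Rightarrow> 'v) \<Rightarrow> bool" where
  "lie_bracket_over S Ls add zero smul br \<longleftrightarrow>
     (\<forall>X\<in>Ls. \<forall>Y\<in>Ls. br X Y \<in> Ls) \<and>
     (\<forall>X\<in>Ls. \<forall>X'\<in>Ls. \<forall>Y\<in>Ls. br (add X X') Y = add (br X Y) (br X' Y)) \<and>
     (\<forall>X\<in>Ls. \<forall>Y\<in>Ls. \<forall>Y'\<in>Ls. br X (add Y Y') = add (br X Y) (br X Y')) \<and>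
     (\<forall>f\<in>S. \<forall>X\<in>Ls. \<forall>Y\<in>Ls. br (smul f X) Y = smul f (br X Y) \<and> br X (smul f Y) = smul f (br X Y)) \<and>
     (\<forall>X\<in>Ls. br X X = zero) \<and>
     (\<forall>X\<in>Ls. \<forall>Y\<in>Ls. \<forall>Z\<in>Ls. add (br X (br Y Z)) (add (br Y (br Z X)) (br Z (br X Y))) = zero)"

definition const_funs :: "('m \<Rightarrow> real) set" where
  "const_funs = {f. \<exists>c. f = (\<lambda>x. c)}"

definition is_derivation :: "('m \<Rightarrow> real) set \<Rightarrow> (('m \<Rightarrow> real) \<Rightarrow> ('m \<Rightarrow> real)) \<Rightarrow> bool" where
  "is_derivation Rs D \<longleftrightarrow>
     (\<forall>f\<in>Rs. D f \<in> Rs) \<and>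
     (\<forall>f\<in>Rs. \<forall>g\<in>Rs. D (\<lambda>x. f x + g x) = (\<lambda>x. D f x + D g x)) \<and>
     (\<forall>c. \<forall>f\<in>Rs. D (\<lambda>x. c * f x) = (\<lambda>x. c * D f x)) \<and>
     (\<forall>f\<in>Rs. \<forall>g\<in>Rs. D (\<lambda>x. f x * g x) = (\<lambda>x. f x * D g x + g x * D f x))"

definition anchor :: "('m \<Rightarrow> real) set \<Rightarrow> 'v set \<Rightarrow> ('v \<Rightarrow> 'v \<Rightarrow> 'v) \<Rightarrow> (('m \<Rightarrow> real) \<Rightarrow> 'v \<Rightarrow> 'v) \<Rightarrow> ('v \<Rightarrow> ('m \<Rightarrow> real) \<Rightarrow> ('m \<Rightarrow> real)) \<Rightarrow> bool" where
  "anchor Rs Ls add smul rho \<longleftrightarrow>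
     (\<forall>X\<in>Ls. is_derivation Rs (rho X)) \<and>
     (\<forall>X\<in>Ls. \<forall>Y\<in>Ls. \<forall>\<phi>\<in>Rs. rho (add X Y) \<phi> = (\<lambda>x. rho X \<phi> x + rho Y \<phi> x)) \<and>
     (\<forall>f\<in>Rs. \<forall>X\<in>Ls. \<forall>\<phi>\<in>Rs. rho (smul f X) \<phi> = (\<lambda>x. f x * rho X \<phi> x))"

definition connection :: "('m \<Rightarrow> real) set \<Rightarrow> 'v set \<Rightarrow> ('v \<Rightarrow> 'v \<Rightarrow> 'v) \<Rightarrow> (('m \<Rightarrow> real) \<Rightarrow> 'v \<Rightarrow> 'v) \<Rightarrow> ('v \<Rightarrow> ('m \<Rightarrow> real) \<Rightarrow> ('m \<Rightarrow> real)) \<Rightarrow> ('v \<Rightarrow> 'v \<Rightarrow> 'v) \<Rightarrow> bool" where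
  "connection Rs Ls add smul rho tri \<longleftrightarrow>
     (\<forall>X\<in>Ls. \<forall>Y\<in>Ls. tri X Y \<in> Ls) \<and>
     (\<forall>X\<in>Ls. \<forall>X'\<in>Ls. \<forall>Y\<in>Ls. tri (add X X') Y = add (tri X Y) (tri X' Y)) \<and>
     (\<forall>f\<in>Rs. \<forall>X\<in>Ls. \<forall>Y\<in>Ls. tri (smul f X) Y = smul f (tri X Y)) \<and>
     (\<forall>X\<in>Ls. \<forall>Y\<in>Ls. \<forall>Y'\<in>Ls. tri X (add Y Y') = add (tri X Y) (tri X Y')) \<and>
     (\<forall>c. \<forall>X\<in>Ls. \<forall>Y\<in>Ls. tri X (smul (\<lambda>x. c) Y) = smul (\<lambda>x. c) (tri X Y)) \<and>
     (\<forall>f\<in>Rs. \<forall>X\<in>Ls. \<forall>Y\<in>Ls. tri X (smul f Y) = add (smul (rho X f) Y) (smul f (tri X Y)))"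

definition Lie_Rinehart :: "('m \<Rightarrow> real) set \<Rightarrow> 'v set \<Rightarrow> ('v \<Rightarrow> 'v \<Rightarrow> 'v) \<Rightarrow> 'v \<Rightarrow> (('m \<Rightarrow> real) \<Rightarrow> 'v \<Rightarrow> 'v) \<Rightarrow> ('v \<Rightarrow> 'v \<Rightarrow> 'v) \<Rightarrow> ('v \<Rightarrow> ('m \<Rightarrow> real) \<Rightarrow> ('m \<Rightarrow> real)) \<Rightarrow> bool" where
  "Lie_Rinehart Rs Ls add zero smul jb rho \<longleftrightarrow>
     comm_R_algebra Rs \<and> R_module Rs Ls add zero smul \<and>
     lie_bracket_over const_funs Ls add zero smul jb \<and>
     anchor Rs Ls add smul rho \<and>
     (\<forall>X\<in>Ls. \<forall>Y\<in>Ls. \<forall>\<phi>\<in>Rs. rho (jb X Y) \<phi> = (\<lambda>x. rho X (rho Y \<phi>) x - rho Y (rho X \<phi>) x)) \<and>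
     (\<forall>f\<in>Rs. \<forall>X\<in>Ls. \<forall>Y\<in>Ls. jb X (smul f Y) = add (smul (rho X f) Y) (smul f (jb X Y)))"

definition post_Lie_Rinehart :: "('m \<Rightarrow> real) set \<Rightarrow> 'v set \<Rightarrow> ('v \<Rightarrow> 'v \<Rightarrow> 'v) \<Rightarrow> 'v \<Rightarrow> (('m \<Rightarrow> real) \<Rightarrow> 'v \<Rightarrow> 'v) \<Rightarrow> ('v \<Rightarrow> 'v \<Rightarrow> 'v) \<Rightarrow> ('v \<Rightarrow> ('m \<Rightarrow> real) \<Rightarrow> ('m \<Rightarrow> real)) \<Rightarrow> ('v \<Rightarrow> 'v \<Rightarrow> 'v) \<Rightarrow> bool" where
  "post_Lie_Rinehart Rs Ls add zero smul br rho tri \<longleftrightarrow>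
     (let neg = smul (\<lambda>x. -1);
          jb = (\<lambda>X Y. add (br X Y) (add (tri X Y) (neg (tri Y X))))
      in comm_R_algebra Rs \<and> R_module Rs Ls add zero smul \<and>
         lie_bracket_over Rs Ls add zero smul br \<and>
         anchor Rs Ls add smul rho \<and>
         connection Rs Ls add smul rho tri \<and>
         Lie_Rinehart Rs Ls add zero smul jb rho \<and>
         (\<forall>X\<in>Ls. \<forall>Y\<in>Ls. \<forall>Z\<in>Ls. tri (jb X Y) Z = add (tri X (tri Y Z)) (neg (tri Y (tri X Z)))) \<and>
         (\<forall>X\<in>Ls. \<forall>Y\<in>Ls. \<forall>Z\<in>Ls. tri X (br Y Z) = add (br (tri X Y) Z) (br Y (tri X Z))))"

definition hat_nabla :: "('v \<Rightarrow> 'v \<Rightarrow> 'v) \<Rightarrow> (('m \<Rightarrow> real) \<Rightarrow> 'v \<Rightarrow> 'v) \<Rightarrow> ('v \<Rightarrow> 'v \<Rightarrow> 'v) \<Rightarrow> 'v \<Rightarrow> ('v \<Rightarrow> 'v) \<Rightarrow> ('v \<Rightarrow> 'v)" where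
  "hat_nabla add smul tri X \<nu> = (\<lambda>Y. add (tri X (\<nu> Y)) (smul (\<lambda>x. -1) (\<nu> (tri X Y))))"

inductive_set El :: "('m \<Rightarrow> real) set \<Rightarrow> 'v set \<Rightarrow> ('v \<Rightarrow> 'v \<Rightarrow> 'v) \<Rightarrow> (('m \<Rightarrow> real) \<Rightarrow> 'v \<Rightarrow> 'v) \<Rightarrow> ('v \<Rightarrow> 'v \<Rightarrow> 'v) \<Rightarrow> ('v \<Rightarrow> 'v \<Rightarrow> 'v) \<Rightarrow> ('v \<Rightarrow> 'v) set"
  for Rs Ls add smul br tri where
  El_d: "set Xs \<subseteq> Ls \<Longrightarrow> Y \<in> Ls \<Longrightarrow>
     foldr (hat_nabla add smul tri) Xs (\<lambda>Z. tri Z Y) \<in> El Rs Ls add smul br tri"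
| El_delta: "set Xs \<subseteq> Ls \<Longrightarrow> Y \<in> Ls \<Longrightarrow>
     foldr (hat_nabla add smul tri) Xs (\<lambda>Z. smul (\<lambda>x. -1) (br Z Y)) \<in> El Rs Ls add smul br tri"
| El_one: "id \<in> El Rs Ls add smul br tri"
| El_smul: "f \<in> Rs \<Longrightarrow> u \<in> El Rs Ls add smul br tri \<Longrightarrow> (\<lambda>Z. smul f (u Z)) \<in> El Rs Ls add smul br tri"
| El_add: "u \<in> El Rs Ls add smul br tri \<Longrightarrow> w \<in> El Rs Ls add smul br tri \<Longrightarrow>
     (\<lambda>Z. add (u Z) (w Z)) \<in> El Rs Ls add smul br tri"
| El_comp: "u \<in> El Rs Ls add smul br tri \<Longrightarrow> w \<in> El Rs Ls add smul br tri \<Longrightarrow>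
     u \<circ> w \<in> El Rs Ls add smul br tri"

definition tracial :: "('m \<Rightarrow> real) set \<Rightarrow> 'v set \<Rightarrow> ('v \<Rightarrow> 'v \<Rightarrow> 'v) \<Rightarrow> (('m \<Rightarrow> real) \<Rightarrow> 'v \<Rightarrow> 'v) \<Rightarrow> ('v \<Rightarrow> 'v \<Rightarrow> 'v) \<Rightarrow> ('v \<Rightarrow> ('m \<Rightarrow> real) \<Rightarrow> ('m \<Rightarrow> real)) \<Rightarrow> ('v \<Rightarrow> 'v \<Rightarrow> 'v) \<Rightarrow> (('v \<Rightarrow> 'v) \<Rightarrow> ('m \<Rightarrow> real)) \<Rightarrow> bool" where
  "tracial Rs Ls add smul br rho tri \<tau> \<longleftrightarrow>
     (let EL = El Rs Ls add smul br tri in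
       (\<forall>\<nu>\<in>EL. \<tau> \<nu> \<in> Rs) \<and>
       (\<forall>f\<in>Rs. \<forall>g\<in>Rs. \<forall>\<nu>\<in>EL. \<forall>\<mu>\<in>EL.
          \<tau> (\<lambda>Z. add (smul f (\<nu> Z)) (smul g (\<mu> Z))) = (\<lambda>x. f x * \<tau> \<nu> x + g x * \<tau> \<mu> x)) \<and>
       (\<forall>X\<in>Ls. \<forall>\<nu>\<in>EL. \<tau> (hat_nabla add smul tri X \<nu>) = rho X (\<tau> \<nu>)) \<and>
       (\<forall>\<nu>\<in>EL. \<forall>\<mu>\<in>EL. \<tau> (\<nu> \<circ> \<mu>) = \<tau> (\<mu> \<circ> \<nu>)))"

end

theory Submission
  imports Defs
begin

text \<open>
  In the frame every vector field is \<open>X = x\<^sup>i E\<^sub>i\<close>, and the Weitzenboeck connection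
  differentiates coefficients, \<open>Y \<rhd> X = Y[x\<^sup>i] E\<^sub>i\<close>; so it is flat and every \<open>E\<^sub>i\<close> is parallel.
  Expanding \<open>\<lbrakk>X,Y\<rbrakk>\<^sub>J\<close> in the frame gives \<open>\<lbrakk>X,Y\<rbrakk>\<^sub>J = [X,Y] + X \<rhd> Y - Y \<rhd> X\<close>: the torsion
  of \<open>\<rhd>\<close> is \<open>-[-,-]\<close>. Hence the Lie-Rinehart axioms for the bracket built from \<open>[-,-]\<close> and
  \<open>\<rhd>\<close> are those of the Jacobi bracket of vector fields, and parallel torsion is exactly the
  post-Lie axiom \<open>X \<rhd> [Y,Z] = [X \<rhd> Y,Z] + [Y,X \<rhd> Z]\<close>. Applied to \<open>E\<^sub>i, E\<^sub>j\<close> it makes the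
  structure functions of \<open>\<lbrakk>E\<^sub>i,E\<^sub>j\<rbrakk>\<^sub>J = c\<^sub>i\<^sub>j\<^sup>k E\<^sub>k\<close> constant; then \<open>[X,[Y,Z]]\<close> is the
  trilinear extension of \<open>\<lbrakk>E\<^sub>i,\<lbrakk>E\<^sub>k,E\<^sub>l\<rbrakk>\<^sub>J\<rbrakk>\<^sub>J\<close>, and the Jacobi identity of \<open>[-,-]\<close> is
  inherited from that of \<open>\<lbrakk>-,-\<rbrakk>\<^sub>J\<close>.

  Elementary endomorphisms are \<open>C\<^sup>\<infinity>(M)\<close>-linear, so they have matrices in the frame, and
  \<open>\<tau>\<close> is the matrix trace: it is cyclic, and \<open>\<tau>(\<nabla>\<^sub>X \<nu>) = X[\<tau>(\<nu>)]\<close> because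
  \<open>(\<nabla>\<^sub>X \<nu>)(E\<^sub>i) = X \<rhd> \<nu>(E\<^sub>i)\<close>.
\<close>

section \<open>Smooth functions\<close>

lemma Ck_on_const: "Ck_on k U (\<lambda>x. c)"
proof (induction k arbitrary: c)
  case 0
  then show ?case by simp
next
  case (Suc k)
  show ?case by (auto intro!: exI[of _ "\<lambda>x v. 0"] Suc)
qed

lemma Ck_on_add: "Ck_on k U f \<Longrightarrow> Ck_on k U g \<Longrightarrow> Ck_on k U (\<lambda>x. f x + g x)"
proof (induction k arbitrary: f g)
  case 0
  then show ?case by (simp add: continuous_on_add)
next
  case (Suc k)
  from Suc.prems obtain Df Dg
    where f: "\<forall>x\<in>U. (f has_derivative Df x) (at x)" "\<forall>v. Ck_on k U (\<lambda>x. Df x v)"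
      and g: "\<forall>x\<in>U. (g has_derivative Dg x) (at x)" "\<forall>v. Ck_on k U (\<lambda>x. Dg x v)"
    by auto
  show ?case
  proof (simp only: Ck_on.simps, intro exI conjI ballI allI)
    fix x assume "x \<in> U"
    then show "((\<lambda>x. f x + g x) has_derivative (\<lambda>v. Df x v + Dg x v)) (at x)"
      using f(1) g(1) by (intro has_derivative_add) auto
  next
    fix v
    show "Ck_on k U (\<lambda>x. Df x v + Dg x v)"
      by (intro Suc.IH f(2)[rule_format] g(2)[rule_format])
  qed
qed

lemma Ck_on_SucD: "Ck_on (Suc k) U f \<Longrightarrow> Ck_on k U f"
proof (induction k arbitrary: f)
  case 0
  then show ?case
    by (auto intro: continuous_at_imp_continuous_on dest: has_derivative_continuous)
next
  case (Suc k)
  from Suc.prems obtain D where "\<forall>x\<in>U. (f has_derivative D x) (at x)"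
    and "\<forall>v. Ck_on (Suc k) U (\<lambda>x. D x v)"
    by (simp only: Ck_on.simps) blast
  with Suc.IH show ?case
    by (simp only: Ck_on.simps) blast
qed

lemma Ck_on_mult:
  fixes f g :: "'a::euclidean_space \<Rightarrow> 'b::real_normed_algebra"
  shows "Ck_on k U f \<Longrightarrow> Ck_on k U g \<Longrightarrow> Ck_on k U (\<lambda>x. f x * g x)"
proof (induction k arbitrary: f g)
  case 0
  then show ?case by (simp add: continuous_on_mult)
next
  case (Suc k)
  from Suc.prems obtain Df Dg
    where f: "\<forall>x\<in>U. (f has_derivative Df x) (at x)" "\<forall>v. Ck_on k U (\<lambda>x. Df x v)"
      and g: "\<forall>x\<in>U. (g has_derivative Dg x) (at x)" "\<forall>v. Ck_on k U (\<lambda>x. Dg x v)"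
    by auto
  have "Ck_on k U f" "Ck_on k U g"
    using Suc.prems Ck_on_SucD by blast+
  show ?case
  proof (simp only: Ck_on.simps, intro exI conjI ballI allI)
    fix x assume "x \<in> U"
    then show "((\<lambda>x. f x * g x) has_derivative (\<lambda>v. f x * Dg x v + Df x v * g x)) (at x)"
      using f(1) g(1) by (intro has_derivative_mult) auto
  next
    fix v
    show "Ck_on k U (\<lambda>x. f x * Dg x v + Df x v * g x)"
      by (intro Ck_on_add Suc.IH \<open>Ck_on k U f\<close> \<open>Ck_on k U g\<close> f(2)[rule_format] g(2)[rule_format])
  qed
qed

lemma smooth_on_add: "smooth_on U f \<Longrightarrow> smooth_on U g \<Longrightarrow> smooth_on U (\<lambda>x. f x + g x)"
  by (simp add: smooth_on_def Ck_on_add)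

lemma smooth_on_mult:
  fixes f g :: "'a::euclidean_space \<Rightarrow> 'b::real_normed_algebra"
  shows "smooth_on U f \<Longrightarrow> smooth_on U g \<Longrightarrow> smooth_on U (\<lambda>x. f x * g x)"
  by (simp add: smooth_on_def Ck_on_mult)

lemma smooth_on_cmult:
  fixes f :: "'a::euclidean_space \<Rightarrow> 'b::real_normed_algebra"
  shows "smooth_on U f \<Longrightarrow> smooth_on U (\<lambda>x. c * f x)"
  by (simp add: smooth_on_def Ck_on_mult Ck_on_const)

lemma smooth_funs_add [simp, intro]:
  "f \<in> smooth_funs A \<Longrightarrow> g \<in> smooth_funs A \<Longrightarrow> (\<lambda>x. f x + g x) \<in> smooth_funs A"
  by (auto simp: smooth_funs_def o_def intro: smooth_on_add)

lemma smooth_funs_mult [simp, intro]: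
  "f \<in> smooth_funs A \<Longrightarrow> g \<in> smooth_funs A \<Longrightarrow> (\<lambda>x. f x * g x) \<in> smooth_funs A"
  by (auto simp: smooth_funs_def o_def intro: smooth_on_mult)

lemma smooth_funs_cmult [simp, intro]: "f \<in> smooth_funs A \<Longrightarrow> (\<lambda>x. c * f x) \<in> smooth_funs A"
  by (auto simp: smooth_funs_def o_def intro: smooth_on_cmult)

lemma smooth_funs_diff [simp, intro]:
  assumes "f \<in> smooth_funs A" "g \<in> smooth_funs A"
  shows "(\<lambda>x. f x - g x) \<in> smooth_funs A"
  using smooth_funs_add[OF assms(1) smooth_funs_cmult[OF assms(2), of "-1"]] by simp

section \<open>Vector fields\<close>

lemma vadd_apply: "vadd X Y f x = X f x + Y f x"
  by (simp add: vadd_def)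

lemma vsmul_apply: "vsmul g X f x = g x * X f x"
  by (simp add: vsmul_def)

lemma vzero_apply: "vzero f x = 0"
  by (simp add: vzero_def)

lemma vsmul_minus_one_cancel: "vsmul (\<lambda>x. -1) X = vsmul (\<lambda>x. -1) Y \<longleftrightarrow> X = Y"
  by (auto simp: fun_eq_iff vsmul_apply)

locale smooth_manifold =
  fixes A :: "('m::topological_space set \<times> ('m \<Rightarrow> 'e::euclidean_space)) set"
  assumes atlas: "smooth_atlas A"
begin

abbreviation R :: "('m \<Rightarrow> real) set" where "R \<equiv> smooth_funs A"
abbreviation L :: "'m vf set" where "L \<equiv> vector_fields A"

lemma smooth_funs_const [simp, intro]: "(\<lambda>x. c) \<in> R"
  using atlas by (auto simp: smooth_atlas_def smooth_funs_def smooth_on_def o_def Ck_on_const)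

lemma smooth_funs_sum [simp, intro]:
  assumes "\<And>i. i \<in> S \<Longrightarrow> f i \<in> R"
  shows "(\<lambda>x. \<Sum>i\<in>S. f i x) \<in> R"
proof (cases "finite S")
  case True
  then show ?thesis
    using assms by (induction S rule: finite_induct) auto
qed simp

lemma comm_R_algebra_smooth_funs: "comm_R_algebra R"
  by (auto simp: comm_R_algebra_def)

lemma vector_fieldsI:
  assumes "\<And>f. f \<in> R \<Longrightarrow> X f \<in> R"
    and "\<And>f g. f \<in> R \<Longrightarrow> g \<in> R \<Longrightarrow> X (\<lambda>x. f x + g x) = (\<lambda>x. X f x + X g x)"
    and "\<And>c f. f \<in> R \<Longrightarrow> X (\<lambda>x. c * f x) = (\<lambda>x. c * X f x)"
    and "\<And>f g. f \<in> R \<Longrightarrow> g \<in> R \<Longrightarrow> X (\<lambda>x. f x * g x) = (\<lambda>x. f x * X g x + g x * X f x)"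
    and "\<And>f. f \<notin> R \<Longrightarrow> X f = (\<lambda>x. 0)"
  shows "X \<in> L"
  using assms unfolding vector_fields_def by auto

lemma
  assumes "X \<in> L"
  shows vf_add: "f \<in> R \<Longrightarrow> g \<in> R \<Longrightarrow> X (\<lambda>x. f x + g x) = (\<lambda>x. X f x + X g x)"
    and vf_cmult: "f \<in> R \<Longrightarrow> X (\<lambda>x. c * f x) = (\<lambda>x. c * X f x)"
    and vf_mult: "f \<in> R \<Longrightarrow> g \<in> R \<Longrightarrow> X (\<lambda>x. f x * g x) = (\<lambda>x. f x * X g x + g x * X f x)"
    and vf_nonsmooth: "f \<notin> R \<Longrightarrow> X f = (\<lambda>x. 0)"
  using assms unfolding vector_fields_def by auto

lemma vf_smooth [simp]: "X \<in> L \<Longrightarrow> X f \<in> R"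
  by (cases "f \<in> R") (auto simp: vector_fields_def)

lemma vf_const [simp]:
  assumes X: "X \<in> L"
  shows "X (\<lambda>x. c) = (\<lambda>x. 0)"
proof -
  have "X (\<lambda>x. 1 * 1) = (\<lambda>x. 1 * X (\<lambda>x. 1) x + 1 * X (\<lambda>x. 1) x)"
    using X by (intro vf_mult) auto
  then have "X (\<lambda>x. 1) = (\<lambda>x. 0)"
    by (simp add: fun_eq_iff)
  then show ?thesis
    using vf_cmult[OF X, of "\<lambda>x. 1" c] by simp
qed

lemma vf_diff:
  assumes X: "X \<in> L" and f: "f \<in> R" and g: "g \<in> R"
  shows "X (\<lambda>x. f x - g x) = (\<lambda>x. X f x - X g x)"
  using vf_add[OF X f smooth_funs_cmult[OF g, of "-1"]] vf_cmult[OF X g, of "-1"] by simp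

lemma vf_sum:
  assumes X: "X \<in> L" and f: "\<And>i. i \<in> S \<Longrightarrow> f i \<in> R"
  shows "X (\<lambda>x. \<Sum>i\<in>S. f i x) = (\<lambda>x. \<Sum>i\<in>S. X (f i) x)"
proof (cases "finite S")
  case True
  then show ?thesis
    using f
  proof (induction S rule: finite_induct)
    case (insert a S)
    then have "X (\<lambda>x. f a x + (\<Sum>i\<in>S. f i x)) = (\<lambda>x. X (f a) x + X (\<lambda>x. \<Sum>i\<in>S. f i x) x)"
      by (intro vf_add X) auto
    with insert show ?case
      by simp
  qed (simp add: X)
qed (simp add: X)

lemma vzero_vector_field [simp, intro]: "vzero \<in> L"
  by (rule vector_fieldsI) (auto simp: vzero_def)

lemma vadd_vector_field [simp, intro]: "X \<in> L \<Longrightarrow> Y \<in> L \<Longrightarrow> vadd X Y \<in> L"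
  by (rule vector_fieldsI) (auto simp: vadd_def vf_add vf_cmult vf_mult vf_nonsmooth algebra_simps)

lemma vsmul_vector_field [simp, intro]: "h \<in> R \<Longrightarrow> X \<in> L \<Longrightarrow> vsmul h X \<in> L"
  by (rule vector_fieldsI) (auto simp: vsmul_def vf_add vf_cmult vf_mult vf_nonsmooth algebra_simps)

lemma vf_vf_mult:
  assumes X: "X \<in> L" and Y: "Y \<in> L" and f: "f \<in> R" and g: "g \<in> R"
  shows "X (Y (\<lambda>x. f x * g x)) =
    (\<lambda>x. f x * X (Y g) x + Y g x * X f x + (g x * X (Y f) x + Y f x * X g x))"
proof -
  have "Y (\<lambda>x. f x * g x) = (\<lambda>x. f x * Y g x + g x * Y f x)"
    using Y f g by (rule vf_mult)
  moreover have "X (\<lambda>x. f x * Y g x + g x * Y f x) = (\<lambda>x. X (\<lambda>x. f x * Y g x) x + X (\<lambda>x. g x * Y f x) x)"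
    using X Y f g by (intro vf_add) auto
  ultimately show ?thesis
    using X Y f g by (simp add: vf_mult vf_smooth)
qed

lemma jacobi_br_vector_field [simp, intro]:
  assumes X: "X \<in> L" and Y: "Y \<in> L"
  shows "jacobi_br X Y \<in> L"
proof (rule vector_fieldsI)
  fix f g assume "f \<in> R" "g \<in> R"
  then show "jacobi_br X Y (\<lambda>x. f x * g x) = (\<lambda>x. f x * jacobi_br X Y g x + g x * jacobi_br X Y f x)"
    using X Y by (simp add: jacobi_br_def vf_vf_mult algebra_simps)
qed (use X Y in \<open>auto simp: jacobi_br_def vf_add vf_cmult vf_nonsmooth algebra_simps\<close>)

lemma R_module_vector_fields: "R_module R L vadd vzero vsmul"
  unfolding R_module_def
  by (intro conjI ballI vzero_vector_field vadd_vector_field vsmul_vector_field)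
    (simp_all add: fun_eq_iff vadd_def vsmul_def vzero_def algebra_simps)

lemma anchor_vector_fields: "anchor R L vadd vsmul (\<lambda>X \<phi>. X \<phi>)"
  by (auto simp: anchor_def is_derivation_def vadd_def vsmul_def vf_add vf_cmult vf_mult)

lemma jacobi_br_jacobi:
  "X \<in> L \<Longrightarrow> Y \<in> L \<Longrightarrow> Z \<in> L \<Longrightarrow>
    vadd (jacobi_br X (jacobi_br Y Z)) (vadd (jacobi_br Y (jacobi_br Z X)) (jacobi_br Z (jacobi_br X Y)))
    = vzero"
  by (simp add: fun_eq_iff jacobi_br_def vadd_def vzero_def vf_diff vf_smooth)

lemma Lie_Rinehart_jacobi_br: "Lie_Rinehart R L vadd vzero vsmul jacobi_br (\<lambda>X \<phi>. X \<phi>)"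
  unfolding Lie_Rinehart_def
proof (intro conjI comm_R_algebra_smooth_funs R_module_vector_fields anchor_vector_fields)
  show "lie_bracket_over const_funs L vadd vzero vsmul jacobi_br"
    unfolding lie_bracket_over_def const_funs_def
    by (intro conjI ballI jacobi_br_vector_field jacobi_br_jacobi; assumption?)
      (auto simp: fun_eq_iff jacobi_br_def vadd_def vsmul_def vzero_def vf_add vf_cmult
        right_diff_distrib)
  show "\<forall>f\<in>R. \<forall>X\<in>L. \<forall>Y\<in>L. jacobi_br X (vsmul f Y) = vadd (vsmul (X f) Y) (vsmul f (jacobi_br X Y))"
    by (auto simp: fun_eq_iff jacobi_br_def vadd_def vsmul_def vf_mult algebra_simps)
qed (simp add: jacobi_br_def)

end

lemma Lie_Rinehart_cong:
  assumes "\<And>X Y. X \<in> Ls \<Longrightarrow> Y \<in> Ls \<Longrightarrow> jb X Y = jb' X Y"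
    and "Lie_Rinehart Rs Ls add zero smul jb' rho"
  shows "Lie_Rinehart Rs Ls add zero smul jb rho"
proof -
  have closed: "\<And>X Y. X \<in> Ls \<Longrightarrow> Y \<in> Ls \<Longrightarrow> add X Y \<in> Ls"
      "\<And>f X. f \<in> Rs \<Longrightarrow> X \<in> Ls \<Longrightarrow> smul f X \<in> Ls"
      "\<And>X Y. X \<in> Ls \<Longrightarrow> Y \<in> Ls \<Longrightarrow> jb' X Y \<in> Ls"
    using assms(2) unfolding Lie_Rinehart_def R_module_def lie_bracket_over_def by auto
  moreover have "\<And>f X. f \<in> const_funs \<Longrightarrow> X \<in> Ls \<Longrightarrow> smul f X \<in> Ls"
    using assms(2) closed(2) unfolding Lie_Rinehart_def comm_R_algebra_def const_funs_def by auto
  ultimately show ?thesis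
    using assms unfolding Lie_Rinehart_def lie_bracket_over_def by (simp cong: ball_cong)
qed

section \<open>Linearity of elementary endomorphisms\<close>

context smooth_manifold
begin

definition R_linear :: "('m vf \<Rightarrow> 'm vf) \<Rightarrow> bool" where
  "R_linear \<nu> \<longleftrightarrow> (\<forall>Z\<in>L. \<nu> Z \<in> L) \<and>
     (\<forall>f\<in>R. \<forall>Z\<in>L. \<nu> (vsmul f Z) = vsmul f (\<nu> Z)) \<and>
     (\<forall>Z\<in>L. \<forall>W\<in>L. \<nu> (vadd Z W) = vadd (\<nu> Z) (\<nu> W))"

lemma R_linearI:
  assumes "\<And>Z. Z \<in> L \<Longrightarrow> \<nu> Z \<in> L"
    and "\<And>f Z. f \<in> R \<Longrightarrow> Z \<in> L \<Longrightarrow> \<nu> (vsmul f Z) = vsmul f (\<nu> Z)"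
    and "\<And>Z W. Z \<in> L \<Longrightarrow> W \<in> L \<Longrightarrow> \<nu> (vadd Z W) = vadd (\<nu> Z) (\<nu> W)"
  shows "R_linear \<nu>"
  using assms unfolding R_linear_def by blast

lemma
  assumes "R_linear \<nu>"
  shows R_linear_vector_field: "Z \<in> L \<Longrightarrow> \<nu> Z \<in> L"
    and R_linear_vsmul: "f \<in> R \<Longrightarrow> Z \<in> L \<Longrightarrow> \<nu> (vsmul f Z) = vsmul f (\<nu> Z)"
    and R_linear_vadd: "Z \<in> L \<Longrightarrow> W \<in> L \<Longrightarrow> \<nu> (vadd Z W) = vadd (\<nu> Z) (\<nu> W)"
  using assms unfolding R_linear_def by blast+

lemma R_linear_vzero:
  assumes "R_linear \<nu>"
  shows "\<nu> vzero = vzero"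
proof -
  have "\<nu> (vsmul (\<lambda>x. 0) vzero) = vsmul (\<lambda>x. 0) (\<nu> vzero)"
    using assms by (intro R_linear_vsmul) auto
  then show ?thesis
    by (simp add: vsmul_def vzero_def)
qed

lemma R_linear_id: "R_linear id"
  by (rule R_linearI) auto

lemma R_linear_scale:
  assumes f: "f \<in> R" and u: "R_linear u"
  shows "R_linear (\<lambda>Z. vsmul f (u Z))"
proof (rule R_linearI)
  fix g Z assume "g \<in> R" "Z \<in> L"
  then show "vsmul f (u (vsmul g Z)) = vsmul g (vsmul f (u Z))"
    using u by (simp add: R_linear_vsmul fun_eq_iff vsmul_apply vadd_apply)
next
  fix Z W assume "Z \<in> L" "W \<in> L"
  then show "vsmul f (u (vadd Z W)) = vadd (vsmul f (u Z)) (vsmul f (u W))"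
    using u by (simp add: R_linear_vadd fun_eq_iff vsmul_apply vadd_apply distrib_left)
qed (use f u R_linear_vector_field in auto)

lemma R_linear_plus:
  assumes u: "R_linear u" and w: "R_linear w"
  shows "R_linear (\<lambda>Z. vadd (u Z) (w Z))"
proof (rule R_linearI)
  fix g Z assume "g \<in> R" "Z \<in> L"
  then show "vadd (u (vsmul g Z)) (w (vsmul g Z)) = vsmul g (vadd (u Z) (w Z))"
    using u w by (simp add: R_linear_vsmul fun_eq_iff vsmul_apply vadd_apply distrib_left)
next
  fix Z W assume "Z \<in> L" "W \<in> L"
  then show "vadd (u (vadd Z W)) (w (vadd Z W)) = vadd (vadd (u Z) (w Z)) (vadd (u W) (w W))"
    using u w by (simp add: R_linear_vadd fun_eq_iff vsmul_apply vadd_apply)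
qed (use u w R_linear_vector_field in auto)

lemma R_linear_comp:
  assumes u: "R_linear u" and w: "R_linear w"
  shows "R_linear (u \<circ> w)"
  using assms by (intro R_linearI) (simp_all add: R_linear_vsmul R_linear_vadd R_linear_vector_field)

lemma R_linear_hat_nabla:
  assumes conn: "connection R L vadd vsmul (\<lambda>X \<phi>. X \<phi>) tri"
    and X: "X \<in> L" and \<nu>: "R_linear \<nu>"
  shows "R_linear (hat_nabla vadd vsmul tri X \<nu>)"
proof -
  have tri_vector_field: "\<And>Y. Y \<in> L \<Longrightarrow> tri X Y \<in> L"
    and tri_vadd: "\<And>Y Y'. Y \<in> L \<Longrightarrow> Y' \<in> L \<Longrightarrow> tri X (vadd Y Y') = vadd (tri X Y) (tri X Y')"
    and tri_vsmul: "\<And>f Y. f \<in> R \<Longrightarrow> Y \<in> L \<Longrightarrow> tri X (vsmul f Y) = vadd (vsmul (X f) Y) (vsmul f (tri X Y))"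
    using conn X unfolding connection_def by blast+
  show ?thesis
  proof (rule R_linearI)
    fix Z assume Z: "Z \<in> L"
    show "hat_nabla vadd vsmul tri X \<nu> Z \<in> L"
      unfolding hat_nabla_def
      using Z by (auto intro!: tri_vector_field R_linear_vector_field[OF \<nu>])
    fix f assume f: "f \<in> R"
    have "tri X (\<nu> (vsmul f Z)) = vadd (vsmul (X f) (\<nu> Z)) (vsmul f (tri X (\<nu> Z)))"
      using \<nu> f Z X by (simp add: R_linear_vsmul R_linear_vector_field tri_vsmul)
    moreover have "\<nu> (tri X (vsmul f Z)) = vadd (vsmul (X f) (\<nu> Z)) (vsmul f (\<nu> (tri X Z)))"
      using \<nu> f Z X by (simp add: R_linear_vsmul R_linear_vadd tri_vsmul tri_vector_field vsmul_vector_field)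
    ultimately show "hat_nabla vadd vsmul tri X \<nu> (vsmul f Z) = vsmul f (hat_nabla vadd vsmul tri X \<nu> Z)"
      unfolding hat_nabla_def by (simp add: fun_eq_iff vsmul_apply vadd_apply algebra_simps)
  next
    fix Z W assume Z: "Z \<in> L" and W: "W \<in> L"
    have "tri X (\<nu> (vadd Z W)) = vadd (tri X (\<nu> Z)) (tri X (\<nu> W))"
      using \<nu> Z W by (simp add: R_linear_vadd R_linear_vector_field tri_vadd)
    moreover have "\<nu> (tri X (vadd Z W)) = vadd (\<nu> (tri X Z)) (\<nu> (tri X W))"
      using \<nu> Z W by (simp add: R_linear_vadd tri_vadd tri_vector_field)
    ultimately show "hat_nabla vadd vsmul tri X \<nu> (vadd Z W) =
        vadd (hat_nabla vadd vsmul tri X \<nu> Z) (hat_nabla vadd vsmul tri X \<nu> W)"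
      unfolding hat_nabla_def by (simp add: fun_eq_iff vsmul_apply vadd_apply algebra_simps)
  qed
qed

lemma El_R_linear:
  assumes conn: "connection R L vadd vsmul (\<lambda>X \<phi>. X \<phi>) tri"
    and br: "\<And>Y. Y \<in> L \<Longrightarrow> R_linear (\<lambda>Z. br Z Y)"
    and "\<nu> \<in> El R L vadd vsmul br tri"
  shows "R_linear \<nu>"
  using assms(3)
proof induction
  have foldr_hat_nabla: "R_linear (foldr (hat_nabla vadd vsmul tri) Xs \<nu>)"
    if "set Xs \<subseteq> L" and "R_linear \<nu>" for Xs \<nu>
    using that by (induction Xs) (auto intro: R_linear_hat_nabla[OF conn])
  {
    case (El_d Xs Y)
    have "R_linear (\<lambda>Z. tri Z Y)"
      using conn El_d(2) unfolding connection_def by (intro R_linearI) simp_all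
    then show ?case
      using El_d by (intro foldr_hat_nabla)
  next
    case (El_delta Xs Y)
    have "R_linear (\<lambda>Z. vsmul (\<lambda>x. -1) (br Z Y))"
      using br[OF El_delta(2)] by (intro R_linear_scale) auto
    then show ?case
      using El_delta by (intro foldr_hat_nabla)
  }
qed (blast intro: R_linear_id R_linear_scale R_linear_plus R_linear_comp)+

end

section \<open>Global frames and the Weitzenboeck connection\<close>

lemma sum_rotate3:
  "(\<Sum>i\<in>A. \<Sum>j\<in>B. \<Sum>k\<in>C. f i j k) = (\<Sum>k\<in>C. \<Sum>i\<in>A. \<Sum>j\<in>B. f i j k)"
proof -
  have "(\<Sum>i\<in>A. \<Sum>j\<in>B. \<Sum>k\<in>C. f i j k) = (\<Sum>i\<in>A. \<Sum>k\<in>C. \<Sum>j\<in>B. f i j k)"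
    by (rule sum.cong[OF refl], rule sum.swap)
  also have "\<dots> = (\<Sum>k\<in>C. \<Sum>i\<in>A. \<Sum>j\<in>B. f i j k)"
    by (rule sum.swap)
  finally show ?thesis .
qed

lemma sum_antisymmetric_form_eq_0:
  fixes a :: "'i \<Rightarrow> 'i \<Rightarrow> real"
  assumes "\<And>i j. a j i = - a i j"
  shows "(\<Sum>i\<in>S. \<Sum>j\<in>S. u i * u j * a i j) = 0"
proof -
  have swap: "u i * u j * a i j = - (u j * u i * a j i)" for i j
    using assms[of j i] by simp
  have "(\<Sum>i\<in>S. \<Sum>j\<in>S. u i * u j * a i j) = (\<Sum>j\<in>S. \<Sum>i\<in>S. u i * u j * a i j)"
    by (rule sum.swap)
  also have "\<dots> = (\<Sum>j\<in>S. \<Sum>i\<in>S. - (u j * u i * a j i))"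
    by (intro sum.cong refl swap)
  also have "\<dots> = - (\<Sum>i\<in>S. \<Sum>j\<in>S. u i * u j * a i j)"
    by (simp add: sum_negf)
  finally show ?thesis
    by simp
qed

locale framed_manifold = smooth_manifold A
  for A :: "('m::topological_space set \<times> ('m \<Rightarrow> 'e::euclidean_space)) set" +
  fixes E :: "nat \<Rightarrow> 'm vf" and n :: nat
  assumes frame: "global_frame A E n"
begin

abbreviation coef :: "'m vf \<Rightarrow> nat \<Rightarrow> 'm \<Rightarrow> real" where "coef \<equiv> frame_coef A E n"
abbreviation comb :: "(nat \<Rightarrow> 'm \<Rightarrow> real) \<Rightarrow> 'm vf" where "comb \<equiv> frame_comb E n"
abbreviation weitz_conn :: "'m vf \<Rightarrow> 'm vf \<Rightarrow> 'm vf" (infixr "\<rhd>" 70)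
  where "X \<rhd> Y \<equiv> weitz A E n X Y"
abbreviation bracket :: "'m vf \<Rightarrow> 'm vf \<Rightarrow> 'm vf" where "bracket \<equiv> frame_bracket A E n"

lemma E_vector_field [simp, intro]: "i < n \<Longrightarrow> E i \<in> L"
  using frame by (simp add: global_frame_def)

lemma comb_vector_field [simp, intro]:
  assumes x: "\<And>i. i < n \<Longrightarrow> x i \<in> R"
  shows "comb x \<in> L"
proof (rule vector_fieldsI)
  fix f g assume "f \<in> R" "g \<in> R"
  then show "comb x (\<lambda>p. f p + g p) = (\<lambda>p. comb x f p + comb x g p)"
    by (simp add: frame_comb_def fun_eq_iff vf_add E_vector_field distrib_left sum.distrib)
next
  fix c f assume "f \<in> R"
  then show "comb x (\<lambda>p. c * f p) = (\<lambda>p. c * comb x f p)"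
    by (simp add: frame_comb_def fun_eq_iff vf_cmult E_vector_field sum_distrib_left mult_ac)
next
  fix f g assume "f \<in> R" "g \<in> R"
  then show "comb x (\<lambda>p. f p * g p) = (\<lambda>p. f p * comb x g p + g p * comb x f p)"
    by (simp add: frame_comb_def fun_eq_iff vf_mult E_vector_field sum_distrib_left sum.distrib
        algebra_simps)
qed (use x in \<open>auto simp: frame_comb_def vf_nonsmooth E_vector_field\<close>)

lemma coef_spec:
  assumes "X \<in> L"
  shows "(\<forall>i<n. coef X i \<in> R) \<and> X = comb (coef X)"
proof -
  have "\<forall>X\<in>L. \<exists>x. (\<forall>i<n. x i \<in> R) \<and> X = comb x"
    using frame by (simp add: global_frame_def)
  then have "\<exists>x. (\<forall>i<n. x i \<in> R) \<and> X = comb x"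
    using assms by blast
  then show ?thesis
    unfolding frame_coef_def by (rule someI_ex)
qed

lemma coef_smooth [simp, intro]: "X \<in> L \<Longrightarrow> i < n \<Longrightarrow> coef X i \<in> R"
  using coef_spec[of X] by simp

lemma comb_coef: "X \<in> L \<Longrightarrow> comb (coef X) = X"
  using coef_spec[of X] by simp

lemma comb_cong: "(\<And>i. i < n \<Longrightarrow> x i = y i) \<Longrightarrow> comb x = comb y"
  unfolding frame_comb_def by (intro ext sum.cong) auto

lemma frame_independent:
  assumes "\<And>i. i < n \<Longrightarrow> x i \<in> R" and "comb x = vzero" and "i < n"
  shows "x i = (\<lambda>p. 0)"
proof -
  have "\<forall>x. (\<forall>i<n. x i \<in> R) \<and> comb x = vzero \<longrightarrow> (\<forall>i<n. x i = (\<lambda>p. 0))"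
    using frame by (simp add: global_frame_def)
  then show ?thesis
    using assms by blast
qed

lemma coef_comb:
  assumes x: "\<And>i. i < n \<Longrightarrow> x i \<in> R" and i: "i < n"
  shows "coef (comb x) i = x i"
proof -
  let ?d = "\<lambda>i p. coef (comb x) i p - x i p"
  have "comb ?d = vzero"
  proof (intro ext)
    fix f p
    have "comb (coef (comb x)) f p = comb x f p"
      using x by (simp add: comb_coef comb_vector_field)
    then show "comb ?d f p = vzero f p"
      by (simp add: frame_comb_def vzero_def left_diff_distrib sum_subtractf)
  qed
  with x i have "?d i = (\<lambda>p. 0)"
    by (intro frame_independent) (simp_all add: comb_vector_field)
  then show ?thesis
    by (simp add: fun_eq_iff)
qed

lemma vector_field_eqI:
  assumes "X \<in> L" "Y \<in> L" "\<And>i p. i < n \<Longrightarrow> coef X i p = coef Y i p"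
  shows "X = Y"
proof -
  have "comb (coef X) = comb (coef Y)"
    using assms(3) by (intro comb_cong) (simp add: fun_eq_iff)
  then show ?thesis
    using assms(1,2) by (simp add: comb_coef)
qed

lemma coef_vzero [simp]:
  assumes "i < n"
  shows "coef vzero i = (\<lambda>p. 0)"
proof -
  have "vzero = comb (\<lambda>i p. 0)"
    by (simp add: vzero_def frame_comb_def)
  then show ?thesis
    using assms coef_comb[of "\<lambda>i p. 0"] by simp
qed

lemma coef_vadd [simp]:
  assumes "X \<in> L" "Y \<in> L" "i < n"
  shows "coef (vadd X Y) i = (\<lambda>p. coef X i p + coef Y i p)"
proof -
  have "vadd X Y = vadd (comb (coef X)) (comb (coef Y))"
    using assms by (simp add: comb_coef)
  also have "\<dots> = comb (\<lambda>i p. coef X i p + coef Y i p)"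
    by (simp add: fun_eq_iff vadd_apply frame_comb_def distrib_right sum.distrib)
  finally have "vadd X Y = comb (\<lambda>i p. coef X i p + coef Y i p)" .
  then show ?thesis
    using assms by (simp add: coef_comb)
qed

lemma coef_vsmul [simp]:
  assumes "h \<in> R" "X \<in> L" "i < n"
  shows "coef (vsmul h X) i = (\<lambda>p. h p * coef X i p)"
proof -
  have "vsmul h X = vsmul h (comb (coef X))"
    using assms by (simp add: comb_coef)
  also have "\<dots> = comb (\<lambda>i p. h p * coef X i p)"
    by (simp add: fun_eq_iff vsmul_apply frame_comb_def sum_distrib_left mult.assoc)
  finally have "vsmul h X = comb (\<lambda>i p. h p * coef X i p)" .
  then show ?thesis
    using assms by (simp add: coef_comb)
qed

lemma coef_E [simp]:
  assumes "k < n" "i < n"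
  shows "coef (E k) i = (\<lambda>p. if i = k then 1 else 0)"
proof -
  have "E k = comb (\<lambda>i p. if i = k then 1 else 0)"
  proof (intro ext)
    fix f p
    have "(\<Sum>i<n. (if i = k then 1 else 0) * E i f p) = (\<Sum>i<n. if i = k then E i f p else 0)"
      by (rule sum.cong) auto
    then show "E k f p = comb (\<lambda>i p. if i = k then 1 else 0) f p"
      using assms(1) by (simp add: frame_comb_def)
  qed
  then show ?thesis
    using assms by (simp add: coef_comb)
qed

lemma weitz_vector_field [simp, intro]: "X \<in> L \<Longrightarrow> X \<rhd> Y \<in> L"
  unfolding weitz_def by (intro comb_vector_field vf_smooth)

lemma coef_weitz [simp]: "X \<in> L \<Longrightarrow> i < n \<Longrightarrow> coef (X \<rhd> Y) i = X (coef Y i)"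
  unfolding weitz_def by (rule coef_comb) auto

lemma weitz_E [simp]: "X \<in> L \<Longrightarrow> k < n \<Longrightarrow> X \<rhd> E k = vzero"
  by (rule vector_field_eqI) auto

lemma connection_weitz: "connection R L vadd vsmul (\<lambda>X \<phi>. X \<phi>) (weitz A E n)"
  unfolding connection_def
  by (intro conjI ballI allI weitz_vector_field vector_field_eqI)
    (auto simp: vadd_apply vsmul_apply vf_add vf_cmult vf_mult)

definition structure_fun :: "nat \<Rightarrow> nat \<Rightarrow> nat \<Rightarrow> 'm \<Rightarrow> real" where
  "structure_fun i j = coef (jacobi_br (E i) (E j))"

lemma structure_fun_smooth [simp, intro]: "i < n \<Longrightarrow> j < n \<Longrightarrow> k < n \<Longrightarrow> structure_fun i j k \<in> R"
  by (simp add: structure_fun_def)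

lemma jacobi_br_E: "i < n \<Longrightarrow> j < n \<Longrightarrow> jacobi_br (E i) (E j) = comb (structure_fun i j)"
  by (simp add: structure_fun_def comb_coef)

lemma frame_bracket_coef_smooth:
  "X \<in> L \<Longrightarrow> Y \<in> L \<Longrightarrow> k < n \<Longrightarrow>
    (\<lambda>p. \<Sum>i<n. \<Sum>j<n. coef X i p * coef Y j p * structure_fun i j k p) \<in> R"
  by (intro smooth_funs_sum smooth_funs_mult coef_smooth structure_fun_smooth) auto

lemma frame_bracket_comb:
  assumes "X \<in> L" "Y \<in> L"
  shows "bracket X Y = comb (\<lambda>k p. \<Sum>i<n. \<Sum>j<n. coef X i p * coef Y j p * structure_fun i j k p)"
proof (intro ext)
  fix f p
  have "bracket X Y f p =
      (\<Sum>i<n. \<Sum>j<n. \<Sum>k<n. coef X i p * coef Y j p * structure_fun i j k p * E k f p)"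
    unfolding frame_bracket_def by (simp add: jacobi_br_E frame_comb_def sum_distrib_left mult.assoc)
  also have "\<dots> = (\<Sum>k<n. \<Sum>i<n. \<Sum>j<n. coef X i p * coef Y j p * structure_fun i j k p * E k f p)"
    by (rule sum_rotate3)
  also have "\<dots> = comb (\<lambda>k p. \<Sum>i<n. \<Sum>j<n. coef X i p * coef Y j p * structure_fun i j k p) f p"
    by (simp add: frame_comb_def sum_distrib_right)
  finally show "bracket X Y f p = \<dots>" .
qed

lemma frame_bracket_vector_field [simp, intro]: "X \<in> L \<Longrightarrow> Y \<in> L \<Longrightarrow> bracket X Y \<in> L"
  by (simp add: frame_bracket_comb frame_bracket_coef_smooth)

lemma coef_frame_bracket [simp]:
  "X \<in> L \<Longrightarrow> Y \<in> L \<Longrightarrow> k < n \<Longrightarrow>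
    coef (bracket X Y) k = (\<lambda>p. \<Sum>i<n. \<Sum>j<n. coef X i p * coef Y j p * structure_fun i j k p)"
  by (simp add: frame_bracket_comb coef_comb frame_bracket_coef_smooth)

lemma vf_frame_expansion:
  assumes "X \<in> L"
  shows "X f p = (\<Sum>i<n. coef X i p * E i f p)"
proof -
  have "X f p = comb (coef X) f p"
    using assms by (simp add: comb_coef)
  then show ?thesis
    by (simp add: frame_comb_def)
qed

lemma vf_vf_frame_expansion:
  assumes X: "X \<in> L" and Y: "Y \<in> L" and f: "f \<in> R"
  shows "X (Y f) p = (\<Sum>i<n. \<Sum>j<n. coef X i p * coef Y j p * E i (E j f) p) + (X \<rhd> Y) f p"
proof -
  have "Y f = (\<lambda>p. \<Sum>j<n. coef Y j p * E j f p)"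
    by (rule ext) (rule vf_frame_expansion[OF Y])
  then have "X (Y f) p = (\<Sum>j<n. X (\<lambda>p. coef Y j p * E j f p) p)"
    using vf_sum[OF X, of "{..<n}" "\<lambda>j p. coef Y j p * E j f p"] Y f by simp
  also have "\<dots> = (\<Sum>j<n. coef Y j p * X (E j f) p + E j f p * X (coef Y j) p)"
    using X Y f by (intro sum.cong refl) (simp add: vf_mult)
  also have "\<dots> = (\<Sum>j<n. \<Sum>i<n. coef X i p * coef Y j p * E i (E j f) p) + (X \<rhd> Y) f p"
    by (simp add: vf_frame_expansion[OF X, of "E _ f"] weitz_def frame_comb_def sum.distrib
        sum_distrib_left mult_ac)
  also have "\<dots> = (\<Sum>i<n. \<Sum>j<n. coef X i p * coef Y j p * E i (E j f) p) + (X \<rhd> Y) f p"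
    by (subst sum.swap) (rule refl)
  finally show ?thesis .
qed

lemma jacobi_br_decomposition:
  assumes X: "X \<in> L" and Y: "Y \<in> L"
  shows "jacobi_br X Y = vadd (bracket X Y) (vadd (X \<rhd> Y) (vsmul (\<lambda>x. -1) (Y \<rhd> X)))"
proof (intro ext)
  fix f p
  show "jacobi_br X Y f p = vadd (bracket X Y) (vadd (X \<rhd> Y) (vsmul (\<lambda>x. -1) (Y \<rhd> X))) f p"
  proof (cases "f \<in> R")
    case True
    have "(\<Sum>i<n. \<Sum>j<n. coef Y i p * coef X j p * E i (E j f) p) =
        (\<Sum>i<n. \<Sum>j<n. coef X i p * coef Y j p * E j (E i f) p)"
      by (subst sum.swap) (simp add: mult.commute)
    then show ?thesis
      using X Y True
      by (simp add: jacobi_br_def vf_vf_frame_expansion frame_bracket_def vadd_apply vsmul_apply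
          right_diff_distrib sum_subtractf)
  next
    case False
    have "vadd (bracket X Y) (vadd (X \<rhd> Y) (vsmul (\<lambda>x. -1) (Y \<rhd> X))) \<in> L"
      using X Y by simp
    from vf_nonsmooth[OF this False] vf_nonsmooth[OF jacobi_br_vector_field[OF X Y] False]
    show ?thesis
      by simp
  qed
qed

lemma torsion_weitz: "X \<in> L \<Longrightarrow> Y \<in> L \<Longrightarrow> torsion (weitz A E n) X Y = vsmul (\<lambda>x. -1) (bracket X Y)"
  by (simp add: fun_eq_iff torsion_def jacobi_br_decomposition vadd_apply vsmul_apply)

lemma frame_bracket_vadd_left:
  "X \<in> L \<Longrightarrow> X' \<in> L \<Longrightarrow> Y \<in> L \<Longrightarrow> bracket (vadd X X') Y = vadd (bracket X Y) (bracket X' Y)"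
  by (simp add: fun_eq_iff frame_bracket_def vadd_apply distrib_right sum.distrib)

lemma frame_bracket_vadd_right:
  "X \<in> L \<Longrightarrow> Y \<in> L \<Longrightarrow> Y' \<in> L \<Longrightarrow> bracket X (vadd Y Y') = vadd (bracket X Y) (bracket X Y')"
  by (simp add: fun_eq_iff frame_bracket_def vadd_apply distrib_left distrib_right sum.distrib)

lemma frame_bracket_vsmul_left:
  "f \<in> R \<Longrightarrow> X \<in> L \<Longrightarrow> Y \<in> L \<Longrightarrow> bracket (vsmul f X) Y = vsmul f (bracket X Y)"
  by (simp add: fun_eq_iff frame_bracket_def vsmul_apply sum_distrib_left mult_ac)

lemma frame_bracket_vsmul_right:
  "f \<in> R \<Longrightarrow> X \<in> L \<Longrightarrow> Y \<in> L \<Longrightarrow> bracket X (vsmul f Y) = vsmul f (bracket X Y)"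
  by (simp add: fun_eq_iff frame_bracket_def vsmul_apply sum_distrib_left mult_ac)

lemma frame_bracket_self: "X \<in> L \<Longrightarrow> bracket X X = vzero"
  by (simp add: fun_eq_iff frame_bracket_def sum_antisymmetric_form_eq_0 jacobi_br_def vzero_apply)

lemma jacobi_br_comb_const:
  assumes X: "X \<in> L" and c: "\<And>j. j < n \<Longrightarrow> c j \<in> R"
    and Xc: "\<And>j. j < n \<Longrightarrow> X (c j) = (\<lambda>p. 0)"
  shows "jacobi_br X (comb c) f p = (\<Sum>j<n. c j p * jacobi_br X (E j) f p)"
proof (cases "f \<in> R")
  case True
  have "X (comb c f) = (\<lambda>p. \<Sum>j<n. X (\<lambda>p. c j p * E j f p) p)"
    unfolding frame_comb_def using True c by (intro vf_sum X) simp
  also have "\<dots> = (\<lambda>p. \<Sum>j<n. c j p * X (E j f) p)"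
    using X c Xc True by (simp add: vf_mult)
  finally show ?thesis
    by (simp add: jacobi_br_def frame_comb_def right_diff_distrib sum_subtractf)
next
  case False
  have "jacobi_br X (E j) f p = 0" if "j < n" for j
    using vf_nonsmooth[OF jacobi_br_vector_field[OF X E_vector_field[OF that]] False] by simp
  moreover have "jacobi_br X (comb c) f p = 0"
    using vf_nonsmooth[OF jacobi_br_vector_field[OF X comb_vector_field[OF c]] False] by simp
  ultimately show ?thesis
    by simp
qed

end

section \<open>The frame trace\<close>

context framed_manifold
begin

lemma R_linear_frame_bracket_left: "Y \<in> L \<Longrightarrow> R_linear (\<lambda>Z. bracket Z Y)"
  by (rule R_linearI) (simp_all add: frame_bracket_vsmul_left frame_bracket_vadd_left)

lemma comb_truncate_Suc:
  assumes "m < n"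
  shows "comb (\<lambda>i. if i < Suc m then x i else (\<lambda>p. 0)) =
    vadd (comb (\<lambda>i. if i < m then x i else (\<lambda>p. 0))) (vsmul (x m) (E m))"
proof (intro ext)
  fix f p
  have "(\<Sum>i<n. (if i < Suc m then x i else (\<lambda>p. 0)) p * E i f p) =
      (\<Sum>i<n. (if i < m then x i else (\<lambda>p. 0)) p * E i f p + (if i = m then x m p * E m f p else 0))"
    by (intro sum.cong refl) auto
  then show "comb (\<lambda>i. if i < Suc m then x i else (\<lambda>p. 0)) f p =
      vadd (comb (\<lambda>i. if i < m then x i else (\<lambda>p. 0))) (vsmul (x m) (E m)) f p"
    using assms by (simp add: frame_comb_def vadd_apply vsmul_apply sum.distrib)
qed

lemma R_linear_coef:
  assumes \<nu>: "R_linear \<nu>" and Z: "Z \<in> L" and k: "k < n"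
  shows "coef (\<nu> Z) k p = (\<Sum>j<n. coef Z j p * coef (\<nu> (E j)) k p)"
proof -
  define Z' where "Z' m = comb (\<lambda>i. if i < m then coef Z i else (\<lambda>p. 0))" for m
  have Z'_vector_field: "Z' m \<in> L" for m
    unfolding Z'_def using Z by simp
  have partial: "coef (\<nu> (Z' m)) k p = (\<Sum>j<m. coef Z j p * coef (\<nu> (E j)) k p)"
    if "m \<le> n" for m
    using that
  proof (induction m)
    case 0
    have "Z' 0 = vzero"
      by (simp add: Z'_def frame_comb_def vzero_def)
    then show ?case
      using \<nu> k by (simp add: R_linear_vzero)
  next
    case (Suc m)
    then have "\<nu> (Z' (Suc m)) = vadd (\<nu> (Z' m)) (vsmul (coef Z m) (\<nu> (E m)))"
      using \<nu> Z Z'_vector_field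
      by (simp add: Z'_def comb_truncate_Suc R_linear_vadd R_linear_vsmul)
    then show ?case
      using Suc \<nu> Z k Z'_vector_field by (simp add: R_linear_vector_field)
  qed
  have "Z' n = Z"
    unfolding Z'_def by (subst comb_coef[OF Z, symmetric]) (rule comb_cong, simp)
  with partial[of n] show ?thesis
    by simp
qed

lemma frame_trace_smooth:
  assumes "R_linear \<nu>"
  shows "frame_trace A E n \<nu> \<in> R"
  unfolding frame_trace_def by (intro smooth_funs_sum coef_smooth R_linear_vector_field[OF assms]) auto

lemma frame_trace_lincomb:
  assumes "f \<in> R" "g \<in> R" "R_linear \<nu>" "R_linear \<mu>"
  shows "frame_trace A E n (\<lambda>Z. vadd (vsmul f (\<nu> Z)) (vsmul g (\<mu> Z))) =
    (\<lambda>x. f x * frame_trace A E n \<nu> x + g x * frame_trace A E n \<mu> x)"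
  using assms
  by (simp add: frame_trace_def R_linear_vector_field sum.distrib sum_distrib_left fun_eq_iff)

lemma frame_trace_hat_nabla:
  assumes X: "X \<in> L" and \<nu>: "R_linear \<nu>"
  shows "frame_trace A E n (hat_nabla vadd vsmul (weitz A E n) X \<nu>) = X (frame_trace A E n \<nu>)"
proof -
  have "coef (hat_nabla vadd vsmul (weitz A E n) X \<nu> (E i)) i = X (coef (\<nu> (E i)) i)" if "i < n" for i
    using that X \<nu> by (simp add: hat_nabla_def R_linear_vzero R_linear_vector_field)
  moreover have "X (\<lambda>p. \<Sum>i<n. coef (\<nu> (E i)) i p) = (\<lambda>p. \<Sum>i<n. X (coef (\<nu> (E i)) i) p)"
    using \<nu> by (intro vf_sum X) (simp add: R_linear_vector_field)
  ultimately show ?thesis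
    by (simp add: frame_trace_def)
qed

lemma frame_trace_comp_commute:
  assumes \<nu>: "R_linear \<nu>" and \<mu>: "R_linear \<mu>"
  shows "frame_trace A E n (\<nu> \<circ> \<mu>) = frame_trace A E n (\<mu> \<circ> \<nu>)"
proof (intro ext)
  fix p
  have "(\<Sum>i<n. coef (\<nu> (\<mu> (E i))) i p) = (\<Sum>i<n. \<Sum>j<n. coef (\<mu> (E i)) j p * coef (\<nu> (E j)) i p)"
    using assms by (intro sum.cong refl) (simp add: R_linear_coef R_linear_vector_field)
  also have "\<dots> = (\<Sum>j<n. \<Sum>i<n. coef (\<nu> (E j)) i p * coef (\<mu> (E i)) j p)"
    by (subst sum.swap) (simp add: mult.commute)
  also have "\<dots> = (\<Sum>i<n. coef (\<mu> (\<nu> (E i))) i p)"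
    using assms by (intro sum.cong refl) (simp add: R_linear_coef R_linear_vector_field)
  finally show "frame_trace A E n (\<nu> \<circ> \<mu>) p = frame_trace A E n (\<mu> \<circ> \<nu>) p"
    by (simp add: frame_trace_def)
qed

lemma tracial_frame_trace:
  "tracial R L vadd vsmul bracket (\<lambda>X \<phi>. X \<phi>) (weitz A E n) (frame_trace A E n)"
proof -
  have "R_linear \<nu>" if "\<nu> \<in> El R L vadd vsmul bracket (weitz A E n)" for \<nu>
    using connection_weitz R_linear_frame_bracket_left that by (rule El_R_linear)
  then show ?thesis
    unfolding tracial_def Let_def
    by (simp add: frame_trace_smooth frame_trace_lincomb frame_trace_hat_nabla
        frame_trace_comp_commute)
qed

end

section \<open>Parallel torsion\<close>

locale weitzenboeck_parallel_torsion = framed_manifold +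
  assumes parallel_torsion:
    "X \<in> L \<Longrightarrow> Y \<in> L \<Longrightarrow> Z \<in> L \<Longrightarrow>
      X \<rhd> torsion (weitz A E n) Y Z =
      vadd (torsion (weitz A E n) (X \<rhd> Y) Z) (torsion (weitz A E n) Y (X \<rhd> Z))"
begin

lemma weitz_frame_bracket:
  assumes X: "X \<in> L" and Y: "Y \<in> L" and Z: "Z \<in> L"
  shows "X \<rhd> bracket Y Z = vadd (bracket (X \<rhd> Y) Z) (bracket Y (X \<rhd> Z))"
proof -
  have "X \<rhd> vsmul (\<lambda>x. -1) (bracket Y Z) = vsmul (\<lambda>x. -1) (X \<rhd> bracket Y Z)"
    using connection_weitz X Y Z unfolding connection_def by simp
  then have "vsmul (\<lambda>x. -1) (X \<rhd> bracket Y Z) =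
      vsmul (\<lambda>x. -1) (vadd (bracket (X \<rhd> Y) Z) (bracket Y (X \<rhd> Z)))"
    using parallel_torsion[OF X Y Z] X Y Z
    by (simp add: torsion_weitz fun_eq_iff vadd_apply vsmul_apply)
  then show ?thesis
    by (simp only: vsmul_minus_one_cancel)
qed

lemma structure_fun_const:
  assumes X: "X \<in> L" and ijk: "i < n" "j < n" "k < n"
  shows "X (structure_fun i j k) = (\<lambda>p. 0)"
proof -
  have "bracket (E i) (E j) = jacobi_br (E i) (E j)"
    using jacobi_br_decomposition[of "E i" "E j"] ijk
    by (simp add: fun_eq_iff vadd_apply vsmul_apply)
  then have "X \<rhd> jacobi_br (E i) (E j) = vadd (bracket vzero (E j)) (bracket (E i) vzero)"
    using weitz_frame_bracket[of X "E i" "E j"] X ijk by simp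
  also have "\<dots> = vzero"
    by (simp add: fun_eq_iff frame_bracket_def vadd_apply vzero_apply)
  finally have "coef (X \<rhd> jacobi_br (E i) (E j)) k = coef vzero k"
    by simp
  then show ?thesis
    using X ijk by (simp add: structure_fun_def)
qed

lemma frame_bracket_nested:
  assumes X: "X \<in> L" and Y: "Y \<in> L" and Z: "Z \<in> L"
  shows "bracket X (bracket Y Z) f p = (\<Sum>i<n. \<Sum>k<n. \<Sum>l<n.
    coef X i p * coef Y k p * coef Z l p * jacobi_br (E i) (jacobi_br (E k) (E l)) f p)"
proof -
  have nested: "jacobi_br (E i) (jacobi_br (E k) (E l)) f p =
      (\<Sum>j<n. structure_fun k l j p * jacobi_br (E i) (E j) f p)"
    if "i < n" "k < n" "l < n" for i k l
    using that by (simp add: jacobi_br_E jacobi_br_comb_const structure_fun_const)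
  have "bracket X (bracket Y Z) f p = (\<Sum>i<n. \<Sum>j<n. coef X i p *
      (\<Sum>k<n. \<Sum>l<n. coef Y k p * coef Z l p * structure_fun k l j p) * jacobi_br (E i) (E j) f p)"
    using X Y Z by (simp add: frame_bracket_def[of A E n X])
  also have "\<dots> = (\<Sum>i<n. \<Sum>j<n. \<Sum>k<n. \<Sum>l<n.
      coef X i p * coef Y k p * coef Z l p * (structure_fun k l j p * jacobi_br (E i) (E j) f p))"
    by (simp add: sum_distrib_left sum_distrib_right mult_ac)
  also have "\<dots> = (\<Sum>i<n. \<Sum>k<n. \<Sum>l<n. \<Sum>j<n.
      coef X i p * coef Y k p * coef Z l p * (structure_fun k l j p * jacobi_br (E i) (E j) f p))"
    by (rule sum.cong[OF refl], rule sum_rotate3[symmetric])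
  also have "\<dots> = (\<Sum>i<n. \<Sum>k<n. \<Sum>l<n.
      coef X i p * coef Y k p * coef Z l p * jacobi_br (E i) (jacobi_br (E k) (E l)) f p)"
    by (simp add: nested sum_distrib_left)
  finally show ?thesis .
qed

lemma frame_bracket_jacobi:
  assumes X: "X \<in> L" and Y: "Y \<in> L" and Z: "Z \<in> L"
  shows "vadd (bracket X (bracket Y Z)) (vadd (bracket Y (bracket Z X)) (bracket Z (bracket X Y))) = vzero"
proof (intro ext)
  fix f p
  let ?J = "\<lambda>i k l. jacobi_br (E i) (jacobi_br (E k) (E l)) f p"
  let ?c = "\<lambda>i k l. coef X i p * coef Y k p * coef Z l p"
  have cyclic: "?J i k l + ?J k l i + ?J l i k = 0" if "i < n" "k < n" "l < n" for i k l
    using fun_cong[OF fun_cong[OF jacobi_br_jacobi[of "E i" "E k" "E l"]], of f p] that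
    by (simp add: vadd_apply vzero_apply add.assoc)
  have "bracket Y (bracket Z X) f p = (\<Sum>k<n. \<Sum>l<n. \<Sum>i<n. coef Y k p * coef Z l p * coef X i p * ?J k l i)"
    by (rule frame_bracket_nested[OF Y Z X])
  also have "\<dots> = (\<Sum>i<n. \<Sum>k<n. \<Sum>l<n. ?c i k l * ?J k l i)"
    by (subst sum_rotate3) (simp add: mult_ac)
  finally have YZX: "bracket Y (bracket Z X) f p = \<dots>" .
  have "bracket Z (bracket X Y) f p = (\<Sum>l<n. \<Sum>i<n. \<Sum>k<n. coef Z l p * coef X i p * coef Y k p * ?J l i k)"
    by (rule frame_bracket_nested[OF Z X Y])
  also have "\<dots> = (\<Sum>i<n. \<Sum>k<n. \<Sum>l<n. ?c i k l * ?J l i k)"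
    by (subst sum_rotate3[symmetric]) (simp add: mult_ac)
  finally have ZXY: "bracket Z (bracket X Y) f p = \<dots>" .
  have "vadd (bracket X (bracket Y Z)) (vadd (bracket Y (bracket Z X)) (bracket Z (bracket X Y))) f p
      = (\<Sum>i<n. \<Sum>k<n. \<Sum>l<n. ?c i k l * (?J i k l + ?J k l i + ?J l i k))"
    using X Y Z
    by (simp add: vadd_apply frame_bracket_nested YZX ZXY distrib_left sum.distrib)
  also have "\<dots> = 0"
    by (simp add: cyclic)
  finally show "vadd (bracket X (bracket Y Z)) (vadd (bracket Y (bracket Z X)) (bracket Z (bracket X Y))) f p
      = vzero f p"
    by (simp add: vzero_apply)
qed

lemma lie_bracket_over_frame_bracket: "lie_bracket_over R L vadd vzero vsmul bracket"
  unfolding lie_bracket_over_def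
  by (simp add: frame_bracket_vadd_left frame_bracket_vadd_right frame_bracket_vsmul_left
      frame_bracket_vsmul_right frame_bracket_self frame_bracket_jacobi)

lemma weitz_jacobi_br:
  assumes "X \<in> L" "Y \<in> L" "Z \<in> L"
  shows "jacobi_br X Y \<rhd> Z = vadd (X \<rhd> (Y \<rhd> Z)) (vsmul (\<lambda>x. -1) (Y \<rhd> (X \<rhd> Z)))"
proof (rule vector_field_eqI)
  fix i p assume i: "i < n"
  then have "coef (jacobi_br X Y \<rhd> Z) i p = jacobi_br X Y (coef Z i) p"
    using assms by simp
  then show "coef (jacobi_br X Y \<rhd> Z) i p = coef (vadd (X \<rhd> (Y \<rhd> Z)) (vsmul (\<lambda>x. -1) (Y \<rhd> (X \<rhd> Z)))) i p"
    using assms i by (simp add: jacobi_br_def)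
qed (use assms in simp_all)

lemma post_Lie_Rinehart_weitz:
  "post_Lie_Rinehart R L vadd vzero vsmul bracket (\<lambda>X \<phi>. X \<phi>) (weitz A E n)"
proof -
  have jacobi_br_eq: "vadd (bracket X Y) (vadd (X \<rhd> Y) (vsmul (\<lambda>x. -1) (Y \<rhd> X))) = jacobi_br X Y"
    if "X \<in> L" "Y \<in> L" for X Y
    using jacobi_br_decomposition[OF that] by simp
  show ?thesis
    unfolding post_Lie_Rinehart_def Let_def
  proof (intro conjI comm_R_algebra_smooth_funs R_module_vector_fields lie_bracket_over_frame_bracket
      anchor_vector_fields connection_weitz ballI)
    show "Lie_Rinehart R L vadd vzero vsmul
        (\<lambda>X Y. vadd (bracket X Y) (vadd (X \<rhd> Y) (vsmul (\<lambda>x. -1) (Y \<rhd> X)))) (\<lambda>X \<phi>. X \<phi>)"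
      using jacobi_br_eq Lie_Rinehart_jacobi_br by (rule Lie_Rinehart_cong)
    fix X Y Z assume "X \<in> L" "Y \<in> L" "Z \<in> L"
    then show "vadd (bracket X Y) (vadd (X \<rhd> Y) (vsmul (\<lambda>x. -1) (Y \<rhd> X))) \<rhd> Z =
        vadd (X \<rhd> (Y \<rhd> Z)) (vsmul (\<lambda>x. -1) (Y \<rhd> (X \<rhd> Z)))"
      and "X \<rhd> bracket Y Z = vadd (bracket (X \<rhd> Y) Z) (bracket Y (X \<rhd> Z))"
      by (simp_all add: jacobi_br_eq weitz_jacobi_br weitz_frame_bracket)
  qed
qed

end

theorem proposition6p1:
  fixes A :: "('m::{t2_space, second_countable_topology} set \<times> ('m \<Rightarrow> 'e::euclidean_space)) set"
    and E :: "nat \<Rightarrow> 'm vf" and n :: nat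
  assumes atlas: "smooth_atlas A"
    and frame: "global_frame A E n"
    and parallel_torsion:
      "\<forall>X\<in>vector_fields A. \<forall>Y\<in>vector_fields A. \<forall>Z\<in>vector_fields A.
         weitz A E n X (torsion (weitz A E n) Y Z) =
         vadd (torsion (weitz A E n) (weitz A E n X Y) Z) (torsion (weitz A E n) Y (weitz A E n X Z))"
  shows "post_Lie_Rinehart (smooth_funs A) (vector_fields A) vadd vzero vsmul
           (frame_bracket A E n) (\<lambda>X \<phi>. X \<phi>) (weitz A E n)
       \<and> tracial (smooth_funs A) (vector_fields A) vadd vsmul
           (frame_bracket A E n) (\<lambda>X \<phi>. X \<phi>) (weitz A E n) (frame_trace A E n)"
proof -
  interpret weitzenboeck_parallel_torsion A E n
    using atlas frame parallel_torsion
    by unfold_locales blast+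
  show ?thesis
    using post_Lie_Rinehart_weitz tracial_frame_trace by blast
qed

end
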